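(* Equip $\mathbb R^{n\times n}$ with the Frobenius metric $g(X,Y)=\langle X,Y\rangle_F$, and equip $\mathbb R^\ell$ with the metric $g^A$ induced by the map $A:\mathbb R^\ell\to\mathbb R^{n\times n}$, $A(x)=A_0+\sum_{i=1}^\ell x_iA_i$. Then $g^A_x(u,v)=u^TBv$ for all $x,u,v\in\mathbb R^\ell$, and the Riemannian gradient of $F$ with respect to $g^A$ is $\nabla_{g^A}F(x)=B^{-1}\nabla F(x)$. Consequently the Riemannian gradient descent iteration $x^{k+1}=x^k-\nabla_{g^A}F(x^k)$ on $(\mathbb R^\ell,g^A)$ coincides with the Lift and Projection iteration: given $x^k$ and $\rho$, with $Z^k=(Q_1\;Q_2)\operatorname{diag}(\Lambda^*,\Lambda_2)(Q_1\;Q_2)^T$ and $x^{k+1}$ the minimiser of $\|Z^k-A(x)\|_F$ over $x\in\mathbb R^\ell$, one has $x^{k+1}=x^k-\nabla_{g^A}F(x^k)$.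
   Context: $A_0,\dots,A_\ell\in\mathbb R^{n\times n}$ are linearly independent real symmetric matrices; $\lambda_1(x)\le\dots\le\lambda_n(x)$ are the eigenvalues of $A(x)$. Given real numbers $\lambda_1^*\le\dots\le\lambda_m^*$ ($m\le n$) and $\rho\in S_n$: $r_i(x)=\lambda_{\rho_i}(x)-\lambda_i^*$, $F(x)=\frac12\sum_{i=1}^m r_i(x)^2$, $\nabla F(x)$ its Euclidean gradient, $\nabla F(x)=J_r(x)^Tr(x)$ with $(J_r)_{ij}=q_i^TA_jq_i$ where $q_i$ is the unit eigenvector for $\lambda_{\rho_i}(x)$. $B\in\mathbb R^{\ell\times\ell}$, $B_{ij}=\langle A_i,A_j\rangle_F=\operatorname{Tr}(A_i^TA_j)$. $A(x^k)=(Q_1\;Q_2)\operatorname{diag}(\Lambda_1,\Lambda_2)(Q_1\;Q_2)^T$ is a spectral decomposition with $(Q_1\;Q_2)$ orthogonal, $\Lambda_1=\operatorname{diag}(\lambda_{\rho_1}(x^k),\dots,\lambda_{\rho_m}(x^k))$, $\Lambda_2=\operatorname{diag}(\lambda_{\rho_{m+1}}(x^k),\dots,\lambda_{\rho_n}(x^k))$, $\Lambda^*=\operatorname{diag}(\lambda_1^*,\dots,\lambda_m^* )$. The induced metric is $g^A_x(u,v)=g(DA(x)[u],DA(x)[v])$, and the Riemannian gradient $\nabla_{g^A}F$ is defined by $DF(x)[v]=g^A_x(v,\nabla_{g^A}F(x))$ for all $v$. *)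

theory Defs
  imports "HOL-Analysis.Analysis" "HOL-Computational_Algebra.Polynomial"
begin

definition frob :: "real^'n^'n \<Rightarrow> real^'n^'n \<Rightarrow> real" where
  "frob X Y = trace (transpose X ** Y)"

definition frob_norm :: "real^'n^'n \<Rightarrow> real" where
  "frob_norm X = sqrt (frob X X)"

text \<open>Characteristic polynomial det(tI - M) and the eigenvalues of M counted with
  multiplicity, in increasing order; eig M i is the (i+1)-th smallest (0-based index).\<close>
definition charpoly :: "real^'n^'n \<Rightarrow> real poly" where
  "charpoly M = det (mat [:0, 1:] - map_matrix (\<lambda>a. [:a:]) M)"

definition eig :: "real^'n^'n \<Rightarrow> nat \<Rightarrow> real" where
  "eig M i = sorted_list_of_multiset (proots (charpoly M)) ! i"

definition Amap :: "real^'n^'n \<Rightarrow> ('l::finite \<Rightarrow> real^'n^'n) \<Rightarrow> real^'l \<Rightarrow> real^'n^'n" where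
  "Amap A0 A x = A0 + (\<Sum>i\<in>UNIV. x$i *\<^sub>R A i)"

definition Bmat :: "('l::finite \<Rightarrow> real^'n^'n) \<Rightarrow> real^'l^'l" where
  "Bmat A = (\<chi> i j. frob (A i) (A j))"

definition gA :: "real^'n^'n \<Rightarrow> ('l::finite \<Rightarrow> real^'n^'n) \<Rightarrow> real^'l \<Rightarrow> real^'l \<Rightarrow> real^'l \<Rightarrow> real" where
  "gA A0 A x u v = frob (frechet_derivative (Amap A0 A) (at x) u)
                        (frechet_derivative (Amap A0 A) (at x) v)"

definition riem_grad :: "real^'n^'n \<Rightarrow> ('l::finite \<Rightarrow> real^'n^'n) \<Rightarrow> (real^'l \<Rightarrow> real) \<Rightarrow> real^'l \<Rightarrow> real^'l" where
  "riem_grad A0 A F x = (THE w. \<forall>v. frechet_derivative F (at x) v = gA A0 A x v w)"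

definition Fobj :: "real^'n^'n \<Rightarrow> ('l::finite \<Rightarrow> real^'n^'n) \<Rightarrow> nat \<Rightarrow> (nat \<Rightarrow> nat) \<Rightarrow> (nat \<Rightarrow> real) \<Rightarrow> real^'l \<Rightarrow> real" where
  "Fobj A0 A m \<rho> lstar x = (1/2) * (\<Sum>i<m. (eig (Amap A0 A x) (\<rho> i) - lstar i)\<^sup>2)"

definition outer :: "real^'n \<Rightarrow> real^'n \<Rightarrow> real^'n^'n" where
  "outer p q = (\<chi> a b. p$a * q$b)"

end

theory Submission
  imports Defs
begin

text \<open>Since \<open>A\<close> is affine with linear part \<open>L u = \<Sum>i. u\<^sub>i A\<^sub>i\<close>, the induced metric is the
  constant Gram form \<open>u\<^sup>T B v\<close>, and \<open>B\<close> is positive definite because the \<open>A\<^sub>i\<close> are linearly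
  independent; solving \<open>\<nabla>F \<bullet> v = (B w) \<bullet> v\<close> for all \<open>v\<close> gives \<open>w = B\<^sup>-\<^sup>1 \<nabla>F\<close>.
  In the Lift and Projection step, \<open>Z\<^sup>k - A(x\<^sup>k)\<close> is the sum over \<open>i < m\<close> of
  \<open>(\<lambda>\<^sup>*\<^sub>i - \<lambda>\<^sub>\<rho>\<^sub>i) q\<^sub>i q\<^sub>i\<^sup>T\<close>, whose Frobenius product with \<open>A\<^sub>j\<close> is \<open>-(\<nabla>F)\<^sub>j\<close>. Hence
  \<open>x\<^sup>k - B\<^sup>-\<^sup>1\<nabla>F\<close> satisfies the normal equations of the least squares problem
  \<open>min \<parallel>Z\<^sup>k - A(x)\<parallel>\<^sub>F\<close>, and by Pythagoras it is its unique minimiser.\<close>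

lemma frob_eq_inner: "frob X Y = X \<bullet> Y"
  unfolding frob_def trace_def matrix_matrix_mult_def transpose_def inner_vec_def
  by (simp add: inner_real_def) (rule sum.swap)

lemma frob_norm_eq_norm: "frob_norm X = norm X"
  by (simp add: frob_norm_def frob_eq_inner norm_eq_sqrt_inner)

lemma inner_outer_self: "(M::real^'n^'n) \<bullet> outer q q = q \<bullet> (M *v q)"
  unfolding inner_vec_def outer_def matrix_vector_mult_def
  by (simp add: sum_distrib_left mult.assoc mult.left_commute)

lemma matrix_inv_right: "invertible M \<Longrightarrow> M ** matrix_inv M = mat 1"
  unfolding matrix_inv_def invertible_def by (rule someI_ex[THEN conjunct1])

definition lincomb :: "('l::finite \<Rightarrow> 'a::real_vector) \<Rightarrow> real^'l \<Rightarrow> 'a" where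
  "lincomb A u = (\<Sum>i\<in>UNIV. u$i *\<^sub>R A i)"

lemma Amap_eq_lincomb: "Amap A0 A x = A0 + lincomb A x"
  by (simp add: Amap_def lincomb_def)

lemma linear_lincomb: "linear (lincomb A)"
  by (rule linearI) (simp_all add: lincomb_def scaleR_add_left sum.distrib scaleR_sum_right)

lemma Amap_diff: "Amap A0 A x - Amap A0 A y = lincomb A (x - y)"
  by (simp add: Amap_eq_lincomb linear_diff[OF linear_lincomb])

lemma lincomb_eq_0_imp:
  assumes "\<And>c. (\<Sum>i\<in>UNIV. c i *\<^sub>R A i) = 0 \<Longrightarrow> \<forall>i. c i = 0"
    and "lincomb A w = 0"
  shows "w = 0"
  using assms by (simp add: lincomb_def vec_eq_iff)

lemma has_derivative_Amap: "(Amap A0 A has_derivative lincomb A) (at x)"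
proof -
  have "bounded_linear (lincomb A)"
    using linear_lincomb linear_conv_bounded_linear by blast
  then have "((\<lambda>x. lincomb A x + A0) has_derivative lincomb A) (at x)"
    by (intro has_derivative_add_const bounded_linear.has_derivative[OF _ has_derivative_ident])
  moreover have "(\<lambda>x. lincomb A x + A0) = Amap A0 A"
    by (rule ext) (simp add: Amap_eq_lincomb add.commute)
  ultimately show ?thesis by simp
qed

lemma frechet_derivative_Amap: "frechet_derivative (Amap A0 A) (at x) = lincomb A"
  by (rule frechet_derivative_at[OF has_derivative_Amap, symmetric])

lemma inner_lincomb_Bmat: "A j \<bullet> lincomb A y = (Bmat A *v y) $ j"
  by (simp add: lincomb_def inner_sum_right Bmat_def matrix_vector_mult_def frob_eq_inner
      mult.commute)

lemma inner_lincomb_lincomb: "lincomb A u \<bullet> lincomb A v = u \<bullet> (Bmat A *v v)"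
proof -
  have "lincomb A u \<bullet> lincomb A v = (\<Sum>i\<in>UNIV. u$i * (A i \<bullet> lincomb A v))"
    by (simp add: lincomb_def[of A u] inner_sum_left)
  also have "\<dots> = u \<bullet> (Bmat A *v v)"
    by (simp only: inner_lincomb_Bmat) (simp add: inner_vec_def)
  finally show ?thesis .
qed

lemma gA_eq_Bmat: "gA A0 A x u v = u \<bullet> (Bmat A *v v)"
  by (simp add: gA_def frechet_derivative_Amap frob_eq_inner inner_lincomb_lincomb)

lemma Bmat_mult_eq_0_imp:
  assumes "\<And>w. lincomb A w = 0 \<Longrightarrow> w = 0" and "Bmat A *v w = 0"
  shows "w = 0"
proof -
  from assms(2) have "lincomb A w \<bullet> lincomb A w = 0"
    by (simp add: inner_lincomb_lincomb)
  with assms(1) show ?thesis by simp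
qed

lemma Bmat_invertible:
  assumes "\<And>w. lincomb A w = 0 \<Longrightarrow> w = 0"
  shows "invertible (Bmat A)"
  unfolding invertible_left_inverse matrix_left_invertible_ker
  using Bmat_mult_eq_0_imp[of A, OF assms] by blast

lemma Bmat_matrix_inv_cancel:
  assumes "\<And>w. lincomb A w = 0 \<Longrightarrow> w = 0"
  shows "Bmat A *v (matrix_inv (Bmat A) *v g) = g"
  using matrix_inv_right[OF Bmat_invertible[of A, OF assms]]
  by (simp add: matrix_vector_mul_assoc)

lemma riem_grad_eq:
  assumes inj: "\<And>w. lincomb A w = 0 \<Longrightarrow> w = 0"
    and g: "GDERIV F x :> g"
  shows "riem_grad A0 A F x = matrix_inv (Bmat A) *v g"
  unfolding riem_grad_def gA_eq_Bmat
proof (rule the_equality)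
  have DF: "frechet_derivative F (at x) = (\<lambda>h. h \<bullet> g)"
    using frechet_derivative_at[OF g[unfolded gderiv_def]] by simp
  show "\<forall>v. frechet_derivative F (at x) v = v \<bullet> (Bmat A *v (matrix_inv (Bmat A) *v g))"
    by (simp add: DF Bmat_matrix_inv_cancel[of A, OF inj])
  fix w assume "\<forall>v. frechet_derivative F (at x) v = v \<bullet> (Bmat A *v w)"
  then have "(g - Bmat A *v w) \<bullet> (g - Bmat A *v w) = 0"
    by (simp add: DF inner_diff_right)
  then have "Bmat A *v (w - matrix_inv (Bmat A) *v g) = 0"
    by (simp add: matrix_vector_mult_diff_distrib Bmat_matrix_inv_cancel[of A, OF inj])
  then show "w = matrix_inv (Bmat A) *v g"
    using Bmat_mult_eq_0_imp[of A, OF inj] by force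
qed

lemma least_squares_unique_minimizer:
  fixes L :: "'a::real_vector \<Rightarrow> 'b::real_inner"
  assumes L: "linear L" and inj: "\<And>w. L w = 0 \<Longrightarrow> w = 0"
    and normal_eq: "\<And>y. L y \<bullet> (Z - (c + L xs)) = 0"
    and min: "norm (Z - (c + L x')) \<le> norm (Z - (c + L xs))"
  shows "x' = xs"
proof -
  define E where "E = Z - (c + L xs)"
  have "Z - (c + L x') = E - L (x' - xs)"
    by (simp add: E_def linear_diff[OF L])
  moreover have "L (x' - xs) \<bullet> E = 0"
    using normal_eq by (simp add: E_def)
  ultimately have "(norm (Z - (c + L x')))\<^sup>2 = (norm E)\<^sup>2 + (norm (L (x' - xs)))\<^sup>2"
    by (simp add: power2_norm_eq_inner inner_diff_left inner_diff_right inner_commute)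
  moreover have "(norm (Z - (c + L x')))\<^sup>2 \<le> (norm E)\<^sup>2"
    using min by (simp add: E_def power_mono)
  ultimately have "L (x' - xs) = 0" by simp
  then show ?thesis using inj by fastforce
qed

lemma inner_lift_residual:
  fixes M :: "real^'n^'n" and q :: "nat \<Rightarrow> real^'n"
  assumes "m \<le> N"
  shows "M \<bullet> ((\<Sum>j<m. l j *\<^sub>R outer (q j) (q j)) + (\<Sum>j\<in>{m..<N}. e j *\<^sub>R outer (q j) (q j))
              - (\<Sum>j<N. e j *\<^sub>R outer (q j) (q j)))
       = - (\<Sum>i<m. (q i \<bullet> (M *v q i)) * (e i - l i))"
proof -
  have split: "{..<N} = {..<m} \<union> {m..<N}" using assms by auto
  have "(\<Sum>j<m. l j *\<^sub>R outer (q j) (q j)) + (\<Sum>j\<in>{m..<N}. e j *\<^sub>R outer (q j) (q j))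
              - (\<Sum>j<N. e j *\<^sub>R outer (q j) (q j))
      = (\<Sum>j<m. (l j - e j) *\<^sub>R outer (q j) (q j))"
    unfolding split by (subst sum.union_disjoint) (auto simp: scaleR_diff_left sum_subtractf)
  also have "M \<bullet> \<dots> = (\<Sum>i<m. (l i - e i) * (q i \<bullet> (M *v q i)))"
    by (simp add: inner_sum_right inner_outer_self)
  also have "\<dots> = - (\<Sum>i<m. (q i \<bullet> (M *v q i)) * (e i - l i))"
    unfolding sum_negf[symmetric] by (rule sum.cong) (simp_all add: algebra_simps)
  finally show ?thesis .
qed

lemma lift_projection_step:
  fixes q :: "nat \<Rightarrow> real^'n"
  assumes inj: "\<And>w. lincomb A w = 0 \<Longrightarrow> w = 0" and "m \<le> N"
    and spectral: "Amap A0 A xk = (\<Sum>j<N. e j *\<^sub>R outer (q j) (q j))"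
    and Z_def: "Z = (\<Sum>j<m. l j *\<^sub>R outer (q j) (q j)) + (\<Sum>j\<in>{m..<N}. e j *\<^sub>R outer (q j) (q j))"
    and proj: "\<And>x. norm (Z - Amap A0 A xnext) \<le> norm (Z - Amap A0 A x)"
  shows "xnext = xk - matrix_inv (Bmat A) *v (\<chi> j. \<Sum>i<m. (q i \<bullet> (A j *v q i)) * (e i - l i))"
proof -
  define g where "g = (\<chi> j. \<Sum>i<m. (q i \<bullet> (A j *v q i)) * (e i - l i))"
  define xs where "xs = xk - matrix_inv (Bmat A) *v g"
  have residual: "A j \<bullet> (Z - Amap A0 A xk) = - g $ j" for j
    unfolding spectral Z_def g_def using inner_lift_residual[OF \<open>m \<le> N\<close>] by simp
  have normal_eq: "A j \<bullet> (Z - Amap A0 A xs) = 0" for j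
  proof -
    have "Z - Amap A0 A xs = (Z - Amap A0 A xk) + (Amap A0 A xk - Amap A0 A xs)"
      by simp
    also have "\<dots> = (Z - Amap A0 A xk) + lincomb A (matrix_inv (Bmat A) *v g)"
      by (simp add: Amap_diff xs_def)
    finally show ?thesis
      by (simp only: inner_add_right residual inner_lincomb_Bmat
          Bmat_matrix_inv_cancel[of A, OF inj] add.left_inverse)
  qed
  have "xnext = xs"
  proof (rule least_squares_unique_minimizer[OF linear_lincomb inj])
    show "lincomb A y \<bullet> (Z - (A0 + lincomb A xs)) = 0" for y
      using normal_eq by (simp add: lincomb_def[of A y] inner_sum_left Amap_eq_lincomb)
    show "norm (Z - (A0 + lincomb A xnext)) \<le> norm (Z - (A0 + lincomb A xs))"
      using proj by (simp add: Amap_eq_lincomb)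
  qed
  then show ?thesis by (simp add: xs_def g_def)
qed

theorem mainTheorem3:
  fixes A0 :: "real^'n^'n" and A :: "'l::finite \<Rightarrow> real^'n^'n"
    and m :: nat and \<rho> :: "nat \<Rightarrow> nat" and lstar :: "nat \<Rightarrow> real"
  assumes symA0: "transpose A0 = A0"
    and symA: "\<And>i. transpose (A i) = A i"
    and indep: "\<And>c0 c. c0 *\<^sub>R A0 + (\<Sum>i\<in>UNIV. c i *\<^sub>R A i) = 0 \<Longrightarrow> c0 = 0 \<and> (\<forall>i. c i = 0)"
    and mn: "m \<le> CARD('n)"
    and lsorted: "\<And>i j. i \<le> j \<Longrightarrow> j < m \<Longrightarrow> lstar i \<le> lstar j"
    and perm: "\<rho> permutes {..<CARD('n)}"
  shows
    "(\<forall>x u v. gA A0 A x u v = u \<bullet> (Bmat A *v v))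
     \<and> (\<forall>x g. GDERIV (Fobj A0 A m \<rho> lstar) x :> g \<longrightarrow>
              riem_grad A0 A (Fobj A0 A m \<rho> lstar) x = matrix_inv (Bmat A) *v g)
     \<and> (\<forall>xk q xnext.
          (\<forall>i<CARD('n). \<forall>j<CARD('n). q i \<bullet> q j = (if i = j then 1 else 0))
          \<and> Amap A0 A xk = (\<Sum>j<CARD('n). eig (Amap A0 A xk) (\<rho> j) *\<^sub>R outer (q j) (q j))
          \<and> GDERIV (Fobj A0 A m \<rho> lstar) xk :>
               (\<chi> j. \<Sum>i<m. (q i \<bullet> (A j *v q i)) * (eig (Amap A0 A xk) (\<rho> i) - lstar i))
          \<and> (let Z = (\<Sum>j<m. lstar j *\<^sub>R outer (q j) (q j))
                   + (\<Sum>j\<in>{m..<CARD('n)}. eig (Amap A0 A xk) (\<rho> j) *\<^sub>R outer (q j) (q j))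
             in \<forall>x. frob_norm (Z - Amap A0 A xnext) \<le> frob_norm (Z - Amap A0 A x))
          \<longrightarrow> xnext = xk - riem_grad A0 A (Fobj A0 A m \<rho> lstar) xk)"
proof -
  have inj: "\<And>w. lincomb A w = 0 \<Longrightarrow> w = 0"
    using indep[of 0] by (intro lincomb_eq_0_imp) auto
  show ?thesis
  proof (intro conjI allI impI)
    show "gA A0 A x u v = u \<bullet> (Bmat A *v v)" for x u v
      by (rule gA_eq_Bmat)
    show "riem_grad A0 A F x = matrix_inv (Bmat A) *v g" if "GDERIV F x :> g" for F x g
      using riem_grad_eq[of A, OF inj that] .
  next
    fix xk q xnext
    assume H: "(\<forall>i<CARD('n). \<forall>j<CARD('n). q i \<bullet> q j = (if i = j then 1 else 0))
          \<and> Amap A0 A xk = (\<Sum>j<CARD('n). eig (Amap A0 A xk) (\<rho> j) *\<^sub>R outer (q j) (q j))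
          \<and> GDERIV (Fobj A0 A m \<rho> lstar) xk :>
               (\<chi> j. \<Sum>i<m. (q i \<bullet> (A j *v q i)) * (eig (Amap A0 A xk) (\<rho> i) - lstar i))
          \<and> (let Z = (\<Sum>j<m. lstar j *\<^sub>R outer (q j) (q j))
                   + (\<Sum>j\<in>{m..<CARD('n)}. eig (Amap A0 A xk) (\<rho> j) *\<^sub>R outer (q j) (q j))
             in \<forall>x. frob_norm (Z - Amap A0 A xnext) \<le> frob_norm (Z - Amap A0 A x))"
    let ?g = "\<chi> j. \<Sum>i<m. (q i \<bullet> (A j *v q i)) * (eig (Amap A0 A xk) (\<rho> i) - lstar i)"
    from H have "xnext = xk - matrix_inv (Bmat A) *v ?g"
      by (intro lift_projection_step[OF inj mn, where l = lstar])
         (auto simp: Let_def frob_norm_eq_norm)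
    moreover have "riem_grad A0 A (Fobj A0 A m \<rho> lstar) xk = matrix_inv (Bmat A) *v ?g"
      using riem_grad_eq[of A, OF inj H[THEN conjunct2, THEN conjunct2, THEN conjunct1]] .
    ultimately show "xnext = xk - riem_grad A0 A (Fobj A0 A m \<rho> lstar) xk"
      by simp
  qed
qed

end
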